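(* Let $x,y$ be non-commuting indeterminates and $C=xyx^{-1}y^{-1}$. Let $(R_n)_{n\in\mathbb Z}$ satisfy $$R_{2n}CR_{2n-2}=1+R_{2n-1},\qquad R_{2n+1}CR_{2n-1}=1+R_{2n}^4\qquad(n\in\mathbb Z),$$ with $R_0=yxy^{-1}$ and $R_1=y$. Then for all $n\ge0$, $R_n$ is a Laurent polynomial in $x,y$ with only non-negative integer coefficients.
   Context: Work in the free skew field (non-commutative rational functions) over $\mathbb C$ generated by $x,y$. A Laurent polynomial in $x,y$ is a $\mathbb Z$-linear combination of words in $x^{\pm1},y^{\pm1}$. *)

theory Defs
  imports Main
begin

datatype gen = GX | GY

type_synonym letter = "gen \<times> bool"

definition eval_letter :: "'a::division_ring \<Rightarrow> 'a \<Rightarrow> letter \<Rightarrow> 'a" where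
  "eval_letter a b l = (let v = (case fst l of GX \<Rightarrow> a | GY \<Rightarrow> b)
                        in if snd l then inverse v else v)"

definition eval_word :: "'a::division_ring \<Rightarrow> 'a \<Rightarrow> letter list \<Rightarrow> 'a" where
  "eval_word a b w = prod_list (map (eval_letter a b) w)"

definition reduced :: "letter list \<Rightarrow> bool" where
  "reduced w = (\<forall>i. Suc i < length w \<longrightarrow>
      \<not> (fst (w ! i) = fst (w ! Suc i) \<and> snd (w ! i) \<noteq> snd (w ! Suc i)))"

text \<open>a, b are nonzero and the induced map from the integral group ring Z[F(x,y)]
  to the division ring is injective: distinct reduced words are Z-linearly
  independent.  This holds for x, y in the free skew field.\<close>
definition free_group_ring_embedding :: "'a::division_ring \<Rightarrow> 'a \<Rightarrow> bool" where
  "free_group_ring_embedding a b \<longleftrightarrow> a \<noteq> 0 \<and> b \<noteq> 0 \<and>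
     (\<forall>c :: letter list \<Rightarrow> int.
        finite {w. c w \<noteq> 0} \<longrightarrow> (\<forall>w. c w \<noteq> 0 \<longrightarrow> reduced w) \<longrightarrow>
        (\<Sum>w\<in>{w. c w \<noteq> 0}. of_int (c w) * eval_word a b w) = 0 \<longrightarrow>
        (\<forall>w. c w = 0))"

text \<open>r is (the image of) a Laurent polynomial in x, y with only non-negative
  integer coefficients: a finite sum of words, counted with multiplicity.\<close>
definition laurent_nonneg :: "'a::division_ring \<Rightarrow> 'a \<Rightarrow> 'a \<Rightarrow> bool" where
  "laurent_nonneg a b r \<longleftrightarrow> (\<exists>ws. r = sum_list (map (eval_word a b) ws))"

end

theory Submission
  imports Defs
begin

text \<open>The even terms \<open>ev n = R (2n)\<close> satisfy the linear recurrence
  \<open>ev (n+2) = L ev (n+1) - C ev n\<close>, where \<open>L = A + B\<close> with \<open>A = x\<^sup>2y\<^sup>-\<^sup>1\<close> and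
  \<open>B = (1+y)x\<^sup>-\<^sup>1(1+y)x\<^sup>-\<^sup>1y\<^sup>-\<^sup>1\<close>, and the odd terms are \<open>od n = R (2n+1) = ev (n+1) C ev n - 1\<close>.
  That this sequence solves both given recurrences follows from four polynomial identities in
  consecutive terms \<open>ev n, ev (n+1)\<close> which the linear recurrence preserves.
  Its minus sign is harmless: \<open>ev (n+2) = B ev (n+1) + left_rem n\<close>, where the remainder
  \<open>left_rem n = A ev (n+1) - C ev n\<close> obeys \<open>left_rem (n+1) = A left_rem n + (AB - C) ev (n+1)\<close>
  and \<open>AB - C\<close> is a sum of three words; the odd terms are handled by similar remainders.
  Finally, in the free skew field a nonempty sum of words is nonzero, so the given recurrences
  determine \<open>R\<close> from \<open>R 0\<close> and \<open>R 1\<close>.\<close>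

section \<open>Sums of words\<close>

definition laurent_pos :: "'a::division_ring \<Rightarrow> 'a \<Rightarrow> 'a \<Rightarrow> bool" where
  "laurent_pos a b r \<longleftrightarrow> (\<exists>ws. ws \<noteq> [] \<and> r = sum_list (map (eval_word a b) ws))"

lemma laurent_pos_imp_nonneg: "laurent_pos a b r \<Longrightarrow> laurent_nonneg a b r"
  unfolding laurent_pos_def laurent_nonneg_def by blast

lemma eval_word_append: "eval_word a b (u @ v) = eval_word a b u * eval_word a b v"
  by (simp add: eval_word_def)

lemma sum_list_eval_word_mult:
  "sum_list (map (eval_word a b) us) * sum_list (map (eval_word a b) vs)
   = sum_list (map (eval_word a b) (concat (map (\<lambda>u. map (\<lambda>v. u @ v) vs) us)))"
  by (induction us)
    (simp_all add: distrib_right sum_list_const_mult o_def eval_word_append map_concat)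

lemma laurent_nonneg_add:
  "laurent_nonneg a b r \<Longrightarrow> laurent_nonneg a b s \<Longrightarrow> laurent_nonneg a b (r + s)"
  unfolding laurent_nonneg_def by (metis map_append sum_list_append)

lemma laurent_nonneg_mult:
  "laurent_nonneg a b r \<Longrightarrow> laurent_nonneg a b s \<Longrightarrow> laurent_nonneg a b (r * s)"
  unfolding laurent_nonneg_def by (metis sum_list_eval_word_mult)

lemma laurent_pos_add_left:
  "laurent_pos a b r \<Longrightarrow> laurent_nonneg a b s \<Longrightarrow> laurent_pos a b (r + s)"
  unfolding laurent_nonneg_def laurent_pos_def
  by (metis append_is_Nil_conv map_append sum_list_append)

lemma laurent_pos_add_right:
  "laurent_nonneg a b r \<Longrightarrow> laurent_pos a b s \<Longrightarrow> laurent_pos a b (r + s)"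
  unfolding laurent_nonneg_def laurent_pos_def
  by (metis append_is_Nil_conv map_append sum_list_append)

lemma laurent_pos_mult:
  assumes "laurent_pos a b r" "laurent_pos a b s"
  shows "laurent_pos a b (r * s)"
proof -
  obtain us vs where "us \<noteq> []" "r = sum_list (map (eval_word a b) us)"
    and "vs \<noteq> []" "s = sum_list (map (eval_word a b) vs)"
    using assms unfolding laurent_pos_def by blast
  moreover from \<open>us \<noteq> []\<close> \<open>vs \<noteq> []\<close>
  have "concat (map (\<lambda>u. map (\<lambda>v. u @ v) vs) us) \<noteq> []"
    by (cases us; cases vs) auto
  ultimately show ?thesis
    unfolding laurent_pos_def by (metis sum_list_eval_word_mult)
qed

lemma laurent_pos_eval_word: "laurent_pos a b (eval_word a b w)"
  unfolding laurent_pos_def by (rule exI[of _ "[w]"]) simp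

lemma laurent_pos_generators:
  "laurent_pos a b 1" "laurent_pos a b a" "laurent_pos a b (inverse a)"
  "laurent_pos a b b" "laurent_pos a b (inverse b)"
  using laurent_pos_eval_word[of a b "[]"] laurent_pos_eval_word[of a b "[(GX, False)]"]
    laurent_pos_eval_word[of a b "[(GX, True)]"] laurent_pos_eval_word[of a b "[(GY, False)]"]
    laurent_pos_eval_word[of a b "[(GY, True)]"]
  by (simp_all add: eval_word_def eval_letter_def)

lemmas laurent_pos_intros =
  laurent_pos_add_left laurent_pos_add_right laurent_pos_mult laurent_pos_imp_nonneg
  laurent_pos_generators

section \<open>A nonempty sum of words is nonzero\<close>

definition cancels :: "letter \<Rightarrow> letter \<Rightarrow> bool" where
  "cancels l m \<longleftrightarrow> fst l = fst m \<and> snd l \<noteq> snd m"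

fun push_letter :: "letter \<Rightarrow> letter list \<Rightarrow> letter list" where
  "push_letter l [] = [l]"
| "push_letter l (m # w) = (if cancels l m then w else l # m # w)"

definition free_reduce :: "letter list \<Rightarrow> letter list" where
  "free_reduce w = foldr push_letter w []"

lemma reduced_Nil: "reduced []" and reduced_single: "reduced [l]"
  by (simp_all add: reduced_def)

lemma reduced_Cons_Cons: "reduced (l # m # w) \<longleftrightarrow> \<not> cancels l m \<and> reduced (m # w)"
  unfolding reduced_def cancels_def
  by (auto simp: All_less_Suc2 less_Suc_eq_0_disj nth_Cons split: nat.splits)

lemma reduced_ConsD: "reduced (l # w) \<Longrightarrow> reduced w"
  by (cases w) (simp_all add: reduced_Nil reduced_Cons_Cons)

lemma reduced_push_letter: "reduced w \<Longrightarrow> reduced (push_letter l w)"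
  by (cases w) (auto simp: reduced_single reduced_Cons_Cons dest: reduced_ConsD)

lemma reduced_free_reduce: "reduced (free_reduce w)"
  unfolding free_reduce_def by (induction w) (simp_all add: reduced_push_letter reduced_Nil)

lemma eval_letter_cancels:
  assumes "a \<noteq> 0" "b \<noteq> 0" "cancels l m"
  shows "eval_letter a b l * eval_letter a b m = 1"
  using assms by (cases l; cases m) (auto simp: cancels_def eval_letter_def split: gen.splits)

lemma eval_word_push_letter:
  assumes "a \<noteq> 0" "b \<noteq> 0"
  shows "eval_word a b (push_letter l w) = eval_letter a b l * eval_word a b w"
proof (cases w)
  case (Cons m v)
  show ?thesis
  proof (cases "cancels l m")
    case True
    then have "eval_letter a b l * (eval_letter a b m * z) = z" for z
      using eval_letter_cancels[OF assms] by (simp add: mult.assoc[symmetric])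
    with True Cons show ?thesis by (simp add: eval_word_def)
  qed (use Cons in \<open>simp add: eval_word_def\<close>)
qed (simp add: eval_word_def)

lemma eval_word_free_reduce:
  "a \<noteq> 0 \<Longrightarrow> b \<noteq> 0 \<Longrightarrow> eval_word a b (free_reduce w) = eval_word a b w"
  unfolding free_reduce_def
  by (induction w) (simp_all add: eval_word_push_letter, simp add: eval_word_def)

lemma sum_list_map_eq_sum_of_count:
  fixes f :: "_ \<Rightarrow> 'a::semiring_1"
  assumes "finite S" "set xs \<subseteq> S"
  shows "sum_list (map f xs) = (\<Sum>y\<in>S. of_nat (count_list xs y) * f y)"
  using assms(2)
proof (induction xs)
  case (Cons x xs)
  have "(\<Sum>y\<in>S. of_nat (count_list (x # xs) y) * f y)
        = (\<Sum>y\<in>S. if x = y then f y else 0) + (\<Sum>y\<in>S. of_nat (count_list xs y) * f y)"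
    by (subst sum.distrib[symmetric]) (rule sum.cong, auto simp: distrib_right add.commute)
  also have "(\<Sum>y\<in>S. if x = y then f y else 0) = f x"
    using Cons.prems assms(1) by (simp add: sum.delta)
  finally show ?case using Cons by simp
qed simp

lemma laurent_pos_nonzero:
  assumes free: "free_group_ring_embedding a b" and pos: "laurent_pos a b r"
  shows "r \<noteq> 0"
proof
  assume "r = 0"
  from free have "a \<noteq> 0" "b \<noteq> 0" by (auto simp: free_group_ring_embedding_def)
  from pos obtain ws where "ws \<noteq> []" and r: "r = sum_list (map (eval_word a b) ws)"
    by (auto simp: laurent_pos_def)
  define vs where "vs = map free_reduce ws"
  define c where "c u = int (count_list vs u)" for u
  have supp: "{u. c u \<noteq> 0} = set vs" by (auto simp: c_def count_list_0_iff)
  moreover have "reduced u" if "u \<in> set vs" for u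
    using that by (auto simp: vs_def reduced_free_reduce)
  ultimately have reduced_supp: "\<forall>u. c u \<noteq> 0 \<longrightarrow> reduced u" by blast
  have "r = sum_list (map (eval_word a b) vs)"
    using r \<open>a \<noteq> 0\<close> \<open>b \<noteq> 0\<close> by (simp add: vs_def o_def eval_word_free_reduce)
  also have "\<dots> = (\<Sum>u\<in>{u. c u \<noteq> 0}. of_int (c u) * eval_word a b u)"
    unfolding supp by (simp add: sum_list_map_eq_sum_of_count[of "set vs"] c_def)
  finally have "(\<Sum>u\<in>{u. c u \<noteq> 0}. of_int (c u) * eval_word a b u) = 0"
    using \<open>r = 0\<close> by simp
  moreover have "finite {u. c u \<noteq> 0}" unfolding supp by simp
  ultimately have "\<forall>u. c u = 0"
    using free reduced_supp unfolding free_group_ring_embedding_def by blast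
  with supp \<open>ws \<noteq> []\<close> show False by (simp add: vs_def)
qed

section \<open>The linear recurrence and its invariants\<close>

definition recurrence_invariant :: "'a::ring_1 \<Rightarrow> 'a \<Rightarrow> 'a \<Rightarrow> 'a \<Rightarrow> 'a \<Rightarrow> bool" where
  "recurrence_invariant L C C' u v \<longleftrightarrow>
     v*C*u - u*v - 1 + C' = 0 \<and>
     C*u*C*u + v*v - L*(v*C*u - 1) = 0 \<and>
     L*v*C - v*L - C*u*C + u = 0 \<and>
     L*u - C*u*L - v + C*v*C = 0"

lemma recurrence_invariant_step:
  assumes "recurrence_invariant L C C' u v"
  shows "recurrence_invariant L C C' v (L*v - C*u)"
proof -
  let ?w = "L*v - C*u"
  from assms have q: "v*C*u - u*v - 1 + C' = 0"
    and j: "C*u*C*u + v*v - L*(v*C*u - 1) = 0"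
    and m: "L*v*C - v*L - C*u*C + u = 0"
    and n: "L*u - C*u*L - v + C*v*C = 0"
    unfolding recurrence_invariant_def by blast+
  have "?w*C*v - v*?w - 1 + C' = (L*v*C - v*L - C*u*C + u)*v + (v*C*u - u*v - 1 + C')"
    by (simp add: algebra_simps)
  with m q have q': "?w*C*v - v*?w - 1 + C' = 0" by simp
  have "C*v*C*v + ?w*?w - L*(?w*C*v - 1)
      = (C*u*C*u + v*v - L*(v*C*u - 1)) + (L*u - C*u*L - v + C*v*C)*v
        - L*(?w*C*v - v*?w - 1 + C') + L*(v*C*u - u*v - 1 + C')"
    by (simp add: algebra_simps)
  with j n q q' have j': "C*v*C*v + ?w*?w - L*(?w*C*v - 1) = 0" by simp
  have "L*?w*C - ?w*L - C*v*C + v = L*(L*v*C - v*L - C*u*C + u) - (L*u - C*u*L - v + C*v*C)"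
    by (simp add: algebra_simps)
  with m n have m': "L*?w*C - ?w*L - C*v*C + v = 0" by simp
  have "L*v - C*v*L - ?w + C*?w*C = C*(L*v*C - v*L - C*u*C + u)"
    by (simp add: algebra_simps)
  with m have n': "L*v - C*v*L - ?w + C*?w*C = 0" by simp
  from q' j' m' n' show ?thesis unfolding recurrence_invariant_def by blast
qed

lemma recurrence_invariant_odd_relation:
  assumes "recurrence_invariant L C C' u v" and "C*C' = 1"
  shows "((L*v - C*u)*C*v - 1) * C * (v*C*u - 1) = 1 + v^4"
proof -
  from assms(1) have q: "v*C*u - u*v - 1 + C' = 0"
    and j: "C*u*C*u + v*v - L*(v*C*u - 1) = 0"
    unfolding recurrence_invariant_def by blast+
  have CC': "C*(C'*z) = z" for z using assms(2) by (simp add: mult.assoc[symmetric])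
  have "((L*v - C*u)*C*v - 1) * C * (v*C*u - 1) - (1 + v^4)
      = - (C*u*C*u + v*v - L*(v*C*u - 1))*v*v
        + L*v*C*(v*C*u - u*v - 1 + C')*v + L*v*C*v*C*(v*C*u - u*v - 1 + C')
        - C*u*C*v*C*(v*C*u - u*v - 1 + C') - C*(v*C*u - u*v - 1 + C')
        - C*u*C*(v*C*u - u*v - 1 + C')*v"
    by (simp add: algebra_simps power4_eq_xxxx assms(2) CC')
  with q j show ?thesis by simp
qed

lemma recurrence_invariant_right:
  assumes "recurrence_invariant L C C' u v" and "C*C' = 1"
  shows "L*v - C*u = (v*L - u)*C'"
proof -
  from assms(1) have "L*v*C - v*L - C*u*C + u = 0"
    unfolding recurrence_invariant_def by blast
  then have "(L*v - C*u)*C = v*L - u"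
    by (simp add: algebra_simps)
  then have "(L*v - C*u)*(C*C') = (v*L - u)*C'"
    by (simp add: mult.assoc[symmetric])
  with assms(2) show ?thesis by simp
qed

section \<open>The explicit solution\<close>

locale nonzero_pair =
  fixes a b :: "'a::division_ring"
  assumes a_nonzero: "a \<noteq> 0" and b_nonzero: "b \<noteq> 0"
begin

lemma inverse_cancel [simp]:
  "a * inverse a = 1" "inverse a * a = 1" "b * inverse b = 1" "inverse b * b = 1"
  "a * (inverse a * z) = z" "inverse a * (a * z) = z"
  "b * (inverse b * z) = z" "inverse b * (b * z) = z"
  using a_nonzero b_nonzero by (simp_all add: mult.assoc[symmetric])

definition "C = a * b * inverse a * inverse b"
definition "C' = b * a * inverse b * inverse a"
definition "A = a * a * inverse b"
definition "B = (1 + b) * inverse a * (1 + b) * inverse a * inverse b"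
definition "L = A + B"
definition "A' = a * a * a * inverse b * inverse a"
definition "B' = (1 + b) * inverse a * inverse b * (1 + b) * inverse a"

fun ev :: "nat \<Rightarrow> 'a" where
  "ev 0 = b * a * inverse b"
| "ev (Suc 0) = (1 + b) * inverse a"
| "ev (Suc (Suc n)) = L * ev (Suc n) - C * ev n"

definition "od n = ev (Suc n) * C * ev n - 1"

lemma C_C': "C * C' = 1"
  by (simp add: C_def C'_def algebra_simps)

lemma L_C': "L * C' = A' + B'"
  by (simp add: L_def A_def B_def A'_def B'_def C'_def algebra_simps)

lemma recurrence_invariant_ev: "recurrence_invariant L C C' (ev n) (ev (Suc n))"
proof (induction n)
  case 0
  show ?case
    by (simp add: recurrence_invariant_def C_def C'_def L_def A_def B_def algebra_simps)
next
  case (Suc n)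
  then show ?case using recurrence_invariant_step by fastforce
qed

lemma od_0: "od 0 = b"
  by (simp add: od_def C_def algebra_simps)

lemma ev_Suc_mult: "ev (Suc n) * C * ev n = 1 + od n"
  by (simp add: od_def)

lemma od_Suc_mult: "od (Suc n) * C * od n = 1 + ev (Suc n) ^ 4"
  using recurrence_invariant_odd_relation[OF recurrence_invariant_ev C_C', of n]
  by (simp add: od_def)

definition "left_rem n = A * ev (Suc n) - C * ev n"
definition "right_rem n = ev (Suc n) * A' - ev n * C'"
definition "od_rem n = left_rem n * C * ev (Suc n) - 1"

lemma ev_Suc_Suc_left: "ev (Suc (Suc n)) = B * ev (Suc n) + left_rem n"
  by (simp add: left_rem_def L_def algebra_simps)

lemma ev_Suc_Suc_right: "ev (Suc (Suc n)) = ev (Suc n) * B' + right_rem n"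
proof -
  have "ev (Suc (Suc n)) = (ev (Suc n) * L - ev n) * C'"
    using recurrence_invariant_right[OF recurrence_invariant_ev C_C', of n] by simp
  also have "\<dots> = ev (Suc n) * (L * C') - ev n * C'"
    by (simp add: algebra_simps)
  finally show ?thesis
    by (simp add: L_C' right_rem_def algebra_simps del: ev.simps)
qed

lemma left_rem_Suc: "left_rem (Suc n) = A * left_rem n + (A * B - C) * ev (Suc n)"
  by (simp add: left_rem_def L_def algebra_simps)

lemma right_rem_Suc: "right_rem (Suc n) = right_rem n * A' + ev (Suc n) * (B' * A' - C')"
  by (simp only: right_rem_def ev_Suc_Suc_right)
    (simp add: right_rem_def algebra_simps del: ev.simps)

lemma od_rem_Suc:
  "od_rem (Suc n) = A * od_rem n * B' + (A * B' - 1) + A * left_rem n * C * right_rem n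
     + (A * B - C) * ev (Suc n) * C * ev (Suc n) * B' + (A * B - C) * ev (Suc n) * C * right_rem n"
proof -
  have "od_rem (Suc n)
      = (A * left_rem n + (A * B - C) * ev (Suc n)) * C * (ev (Suc n) * B' + right_rem n) - 1"
    unfolding od_rem_def left_rem_Suc ev_Suc_Suc_right[symmetric] ..
  then show ?thesis by (simp add: od_rem_def algebra_simps)
qed

lemma od_Suc: "od (Suc n) = B * ev (Suc n) * C * ev (Suc n) + od_rem n"
  by (simp add: od_def od_rem_def ev_Suc_Suc_left[of n] algebra_simps del: ev.simps)

lemma laurent_pos_constants:
  "laurent_pos a b C" "laurent_pos a b A" "laurent_pos a b B"
  "laurent_pos a b A'" "laurent_pos a b B'"
  unfolding C_def A_def B_def A'_def B'_def by (intro laurent_pos_intros)+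

lemma laurent_pos_AB_minus_C: "laurent_pos a b (A * B - C)"
proof -
  have "A * B - C = a*a*inverse b*inverse a*inverse a*inverse b
      + a*a*inverse b*inverse a*b*inverse a*inverse b + inverse b"
    by (simp add: A_def B_def C_def algebra_simps)
  then show ?thesis by (simp only:) (intro laurent_pos_intros)
qed

lemma laurent_pos_B'A'_minus_C': "laurent_pos a b (B' * A' - C')"
proof -
  have "B' * A' - C' = a*inverse b*inverse a + inverse a*inverse b*a*a*inverse b*inverse a
      + b*inverse a*inverse b*a*a*inverse b*inverse a"
    by (simp add: A'_def B'_def C'_def algebra_simps)
  then show ?thesis by (simp only:) (intro laurent_pos_intros)
qed

lemma laurent_pos_AB'_minus_1: "laurent_pos a b (A * B' - 1)"
proof -
  have "A * B' - 1 = a*a*inverse b*inverse a*inverse a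
      + a*a*inverse b*inverse a*inverse b*inverse a + a*inverse b*inverse a"
    by (simp add: A_def B'_def algebra_simps)
  then show ?thesis by (simp only:) (intro laurent_pos_intros)
qed

lemma laurent_pos_ev_and_remainders:
  "laurent_pos a b (ev (Suc n)) \<and> laurent_nonneg a b (left_rem n)
   \<and> laurent_nonneg a b (right_rem n) \<and> laurent_nonneg a b (od_rem n)"
proof (induction n)
  case 0
  have "left_rem 0 = a*a*inverse b*inverse a" "right_rem 0 = a*a*inverse b*inverse a"
    "od_rem 0 = a*inverse b*inverse a"
    by (simp_all add: left_rem_def right_rem_def od_rem_def A_def A'_def C_def C'_def
        algebra_simps)
  then show ?case by simp (intro conjI laurent_pos_intros)
next
  case (Suc n)
  then have ev: "laurent_pos a b (ev (Suc n))" and "laurent_nonneg a b (left_rem n)"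
    "laurent_nonneg a b (right_rem n)" "laurent_nonneg a b (od_rem n)"
    by auto
  note nonneg = this laurent_pos_imp_nonneg[OF ev]
    laurent_pos_constants[THEN laurent_pos_imp_nonneg]
    laurent_pos_AB_minus_C[THEN laurent_pos_imp_nonneg]
    laurent_pos_B'A'_minus_C'[THEN laurent_pos_imp_nonneg]
    laurent_pos_AB'_minus_1[THEN laurent_pos_imp_nonneg]
  have "laurent_pos a b (ev (Suc (Suc n)))"
    unfolding ev_Suc_Suc_left
    by (intro laurent_pos_add_left laurent_pos_mult ev laurent_pos_constants nonneg)
  moreover have "laurent_nonneg a b (left_rem (Suc n))"
    unfolding left_rem_Suc by (intro laurent_nonneg_add laurent_nonneg_mult nonneg)
  moreover have "laurent_nonneg a b (right_rem (Suc n))"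
    unfolding right_rem_Suc by (intro laurent_nonneg_add laurent_nonneg_mult nonneg)
  moreover have "laurent_nonneg a b (od_rem (Suc n))"
    unfolding od_rem_Suc by (intro laurent_nonneg_add laurent_nonneg_mult nonneg)
  ultimately show ?case by blast
qed

lemma laurent_pos_ev: "laurent_pos a b (ev n)"
proof (cases n)
  case 0
  then show ?thesis by simp (intro laurent_pos_intros)
qed (use laurent_pos_ev_and_remainders in blast)

lemma laurent_pos_od: "laurent_pos a b (od n)"
proof (cases n)
  case 0
  then show ?thesis by (simp add: od_0 laurent_pos_generators)
next
  case (Suc m)
  then show ?thesis
    using laurent_pos_ev_and_remainders[of m] laurent_pos_constants
    unfolding Suc od_Suc by (intro laurent_pos_add_left laurent_pos_mult laurent_pos_ev) auto
qed

lemma recurrence_solution_eq_ev_od: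
  assumes free: "free_group_ring_embedding a b"
    and rec_even: "\<forall>n::int. R (2*n) * C * R (2*n - 2) = 1 + R (2*n - 1)"
    and rec_odd: "\<forall>n::int. R (2*n + 1) * C * R (2*n - 1) = 1 + R (2*n) ^ 4"
    and R0: "R 0 = b * a * inverse b"
    and R1: "R 1 = b"
  shows "R (int (2 * n)) = ev n \<and> R (int (2 * n + 1)) = od n"
proof (induction n)
  case 0
  then show ?case using R0 R1 od_0 by simp
next
  case (Suc n)
  have C_ev: "C * ev n \<noteq> 0" and C_od: "C * od n \<noteq> 0"
    using laurent_pos_nonzero[OF free] laurent_pos_constants laurent_pos_ev laurent_pos_od
    by simp_all
  have idx: "2 * (int n + 1) = int (2 * Suc n)" "2 * (int n + 1) - 2 = int (2 * n)"
    "2 * (int n + 1) - 1 = int (2 * n + 1)" "2 * (int n + 1) + 1 = int (2 * Suc n + 1)"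
    by simp_all
  have "R (int (2 * Suc n)) * (C * ev n) = ev (Suc n) * (C * ev n)"
    using rec_even[rule_format, of "int n + 1"] Suc ev_Suc_mult[of n]
    unfolding idx by (simp add: mult.assoc)
  then have ev: "R (int (2 * Suc n)) = ev (Suc n)"
    using C_ev by simp
  have "R (int (2 * Suc n + 1)) * (C * od n) = od (Suc n) * (C * od n)"
    using rec_odd[rule_format, of "int n + 1"] Suc ev od_Suc_mult[of n]
    unfolding idx by (simp add: mult.assoc)
  then have "R (int (2 * Suc n + 1)) = od (Suc n)"
    using C_od by simp
  with ev show ?case by simp
qed

end

theorem theorem4p8:
  fixes a b :: "'a::division_ring" and R :: "int \<Rightarrow> 'a"
  assumes free: "free_group_ring_embedding a b"
    and rec_even: "\<forall>n::int. R (2*n) * (a * b * inverse a * inverse b) * R (2*n - 2) = 1 + R (2*n - 1)"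
    and rec_odd: "\<forall>n::int. R (2*n + 1) * (a * b * inverse a * inverse b) * R (2*n - 1) = 1 + R (2*n) ^ 4"
    and R0: "R 0 = b * a * inverse b"
    and R1: "R 1 = b"
  shows "\<forall>n::int. n \<ge> 0 \<longrightarrow> laurent_nonneg a b (R n)"
proof (intro allI impI)
  interpret nonzero_pair a b
    using free by unfold_locales (auto simp: free_group_ring_embedding_def)
  fix n :: int
  assume "n \<ge> 0"
  then obtain m where "n = int m" by (metis nonneg_eq_int)
  moreover obtain k where "m = 2 * k \<or> m = 2 * k + 1" by (metis oddE evenE)
  moreover have "R (int (2 * k)) = ev k \<and> R (int (2 * k + 1)) = od k"
    using recurrence_solution_eq_ev_od[OF free] rec_even rec_odd R0 R1 by (simp add: C_def)
  ultimately show "laurent_nonneg a b (R n)"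
    using laurent_pos_ev laurent_pos_od by (auto intro: laurent_pos_imp_nonneg)
qed

end
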